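(* Let $n_{y'}$ be the number of occurrences of $y'$ among $y_1,\dots,y_l$, and define \[ e_{y'}:=\frac{1}{Y}\,\frac{l+Y\alpha}{n_{y'}+\alpha},\qquad y'\in\mathbf{Y}. \] Then $(e_{y'})$ is an e-variable valid under the Bayesian model, and it is the unique solution of \[ \mathbb{E}\sum_{y'\in\mathbf{Y}}\ln e_{y'}\to\max \] over all e-variables valid under the Bayesian model. Here the expectation is over $y_1,\dots,y_l,y$ generated from the Bayesian model.
   Context: Bayesian model: the label space is $\mathbf{Y}=\{1,\dots,Y\}$ with $Y\ge2$. The parameter $\theta$ lies in the simplex $\Theta=\{\theta\in[0,1]^Y:\sum_y\theta_y=1\}$ and is drawn from $\mathrm{Dir}(\alpha,\dots,\alpha)$ with $\alpha>0$. Given $\theta$, the observations $y_1,\dots,y_l,y$ are i.i.d. with $\Pr(y_i=u)=\theta_u$. The first $l$ observations form the training set; $y$ is the test observation. An e-variable is a family of nonnegative values $e_{y'}=f(y_1,\dots,y_l,y')$, $y'\in\mathbf{Y}$, for some function $f$. It is valid under the Bayesian model if $\mathbb{E}\,f(y_1,\dots,y_l,y)\le1$, where $y$ is the actual test observation. The convention $\ln 0=-\infty$ is used. *)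

theory Defs
  imports "HOL-Analysis.Analysis"
begin

text \<open>Labels are 1..Y. The Dirichlet parameter theta is parametrised by its first
  Y-1 coordinates x (indexed 1..Y-1), with theta_Y = 1 - sum of the others.\<close>

definition theta_of :: "nat \<Rightarrow> (nat \<Rightarrow> real) \<Rightarrow> nat \<Rightarrow> real" where
  "theta_of Y x u = (if u = Y then 1 - (\<Sum>v\<in>{1..<Y}. x v) else x u)"

definition dir_density :: "nat \<Rightarrow> real \<Rightarrow> (nat \<Rightarrow> real) \<Rightarrow> real" where
  "dir_density Y \<alpha> x =
     (if (\<forall>u\<in>{1..Y}. 0 < theta_of Y x u)
      then Gamma (real Y * \<alpha>) / (Gamma \<alpha>) ^ Y * (\<Prod>u\<in>{1..Y}. theta_of Y x u powr (\<alpha> - 1))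
      else 0)"

definition bayes_prob :: "nat \<Rightarrow> real \<Rightarrow> nat list \<Rightarrow> real" where
  "bayes_prob Y \<alpha> ys =
     enn2real (\<integral>\<^sup>+ x. ennreal (dir_density Y \<alpha> x * (\<Prod>i<length ys. theta_of Y x (ys ! i)))
                  \<partial>(\<Pi>\<^sub>M u\<in>{1..<Y}. lborel))"

definition train_sets :: "nat \<Rightarrow> nat \<Rightarrow> nat list set" where
  "train_sets Y l = {ts. length ts = l \<and> set ts \<subseteq> {1..Y}}"

text \<open>An e-variable: f ts y' is e_{y'} for training sequence ts.\<close>
definition e_variable :: "nat \<Rightarrow> nat \<Rightarrow> (nat list \<Rightarrow> nat \<Rightarrow> real) \<Rightarrow> bool" where
  "e_variable Y l f \<longleftrightarrow> (\<forall>ts\<in>train_sets Y l. \<forall>y'\<in>{1..Y}. 0 \<le> f ts y')"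

definition bayes_expect :: "nat \<Rightarrow> real \<Rightarrow> nat \<Rightarrow> (nat list \<Rightarrow> nat \<Rightarrow> real) \<Rightarrow> real" where
  "bayes_expect Y \<alpha> l f =
     (\<Sum>ts\<in>train_sets Y l. \<Sum>y\<in>{1..Y}. bayes_prob Y \<alpha> (ts @ [y]) * f ts y)"

definition valid_bayes :: "nat \<Rightarrow> real \<Rightarrow> nat \<Rightarrow> (nat list \<Rightarrow> nat \<Rightarrow> real) \<Rightarrow> bool" where
  "valid_bayes Y \<alpha> l f \<longleftrightarrow> e_variable Y l f \<and> bayes_expect Y \<alpha> l f \<le> 1"

definition ln_ext :: "real \<Rightarrow> ereal" where
  "ln_ext v = (if v = 0 then -\<infinity> else ereal (ln v))"

definition log_obj :: "nat \<Rightarrow> real \<Rightarrow> nat \<Rightarrow> (nat list \<Rightarrow> nat \<Rightarrow> real) \<Rightarrow> ereal" where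
  "log_obj Y \<alpha> l f =
     (\<Sum>ts\<in>train_sets Y l. \<Sum>y\<in>{1..Y}.
        ereal (bayes_prob Y \<alpha> (ts @ [y])) * (\<Sum>y'\<in>{1..Y}. ln_ext (f ts y')))"

end

theory Submission
  imports Defs
begin

text \<open>Integrating out the Dirichlet prior (a Dirichlet integral, computed by peeling off one
  coordinate at a time with the Beta integral) turns the model into a Polya urn: the training
  sequence \<open>ts\<close> has positive marginal probability \<open>P ts\<close>, and
  \<open>P (ts @ [y]) = P ts * w ts y\<close> with predictive probability
  \<open>w ts y = (n\<^sub>y + \<alpha>) / (l + Y * \<alpha>)\<close>. Validity of \<open>e\<close> says that the sum of
  \<open>P (ts @ [y]) * e ts y\<close> over all \<open>(ts, y)\<close> is at most 1, and the objective is the sum of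
  \<open>P ts * ln (e ts y')\<close> over all \<open>(ts, y')\<close>. For positive weights \<open>a\<close>, \<open>b\<close>, the sum
  \<open>\<Sum> a ln f\<close> under \<open>\<Sum> b f \<le> 1\<close> is maximised exactly at \<open>f = a / (\<Sum>a * b)\<close>, by
  \<open>ln x \<le> x - 1\<close> with equality only at \<open>x = 1\<close>; here that is
  \<open>P ts / (Y * P (ts @ [y])) = 1 / (Y * w ts y)\<close>, the claimed e-variable. An e-variable
  vanishing somewhere has objective \<open>-\<infinity>\<close> since all \<open>P (ts @ [y])\<close> are positive.\<close>

lemma nn_integral_beta_scaled:
  fixes a b s :: real
  assumes a: "a > 0" and b: "b > 0" and s: "s > 0"
  shows "(\<integral>\<^sup>+y. ennreal (if 0 < y \<and> y < s then y powr (a - 1) * (s - y) powr (b - 1) else 0) \<partial>lborel)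
         = ennreal (s powr (a + b - 1) * Beta a b)"
proof -
  let ?g = "\<lambda>y. ennreal (if 0 < y \<and> y < s then y powr (a - 1) * (s - y) powr (b - 1) else 0)"
  let ?beta = "\<lambda>x. ennreal (x powr (a - 1) * (1 - x) powr (b - 1)) * indicator {0..1} x"
  have rescale: "?g (0 + s * x) = ennreal (s powr (a - 1) * s powr (b - 1)) * ?beta x" for x
  proof (cases "0 < x \<and> x < 1")
    case True
    have "s - s * x = s * (1 - x)" by (simp add: algebra_simps)
    with True s show ?thesis
      by (simp add: powr_mult ennreal_mult[symmetric] indicator_def mult_ac)
  next
    case False
    with s have "?g (0 + s * x) = 0"
      by (auto simp: zero_less_mult_iff mult_less_cancel_left1)
    moreover have "?beta x = 0"
      using False by (cases "x = 0 \<or> x = 1") (auto simp: indicator_def)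
    ultimately show ?thesis by simp
  qed
  have "(\<integral>\<^sup>+y. ?g y \<partial>lborel) = \<bar>s\<bar> * (\<integral>\<^sup>+x. ?g (0 + s * x) \<partial>lborel)"
    by (rule nn_integral_real_affine) (use s in auto)
  also have "\<dots> = \<bar>s\<bar> * (ennreal (s powr (a - 1) * s powr (b - 1)) * (\<integral>\<^sup>+x. ?beta x \<partial>lborel))"
    unfolding rescale by (subst nn_integral_cmult) auto
  also have "(\<integral>\<^sup>+x. ?beta x \<partial>lborel) = ennreal (Beta a b)"
    by (rule nn_integral_has_integral_lebesgue'[OF _ has_integral_Beta_real[OF a b]]) auto
  also have "ennreal \<bar>s\<bar> * (ennreal (s powr (a - 1) * s powr (b - 1)) * ennreal (Beta a b))
     = ennreal (s powr (a + b - 1) * Beta a b)"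
  proof -
    have "\<bar>s\<bar> * (s powr (a - 1) * s powr (b - 1)) = s powr (a + b - 1)"
      using s by (simp add: powr_add[symmetric] powr_mult_base)
    moreover have "Beta a b \<ge> 0" using a b by (simp add: Beta_def)
    ultimately show ?thesis
      using s by (simp add: ennreal_mult[symmetric] mult.assoc)
  qed
  finally show ?thesis .
qed

definition dirichlet_kernel :: "'i set \<Rightarrow> ('i \<Rightarrow> real) \<Rightarrow> real \<Rightarrow> real \<Rightarrow> ('i \<Rightarrow> real) \<Rightarrow> real" where
  "dirichlet_kernel A a c s x = (if (\<forall>i\<in>A. 0 < x i) \<and> sum x A < s
     then (\<Prod>i\<in>A. x i powr (a i - 1)) * (s - sum x A) powr (c - 1) else 0)"

lemma dirichlet_kernel_nonneg: "dirichlet_kernel A a c s x \<ge> 0"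
  unfolding dirichlet_kernel_def by (auto intro!: prod_nonneg mult_nonneg_nonneg)

lemma dirichlet_kernel_measurable[measurable]:
  "finite A \<Longrightarrow> dirichlet_kernel A a c s \<in> borel_measurable (Pi\<^sub>M A (\<lambda>_. lborel))"
  unfolding dirichlet_kernel_def by measurable

lemma dirichlet_kernel_insert:
  assumes "b \<notin> A" "finite A"
  shows "dirichlet_kernel (insert b A) a c s (x(b := y)) =
    (if 0 < y \<and> y < s then y powr (a b - 1) else 0) * dirichlet_kernel A a c (s - y) x"
proof -
  have sum_upd: "sum (x(b := y)) (insert b A) = y + sum x A"
    and prod_upd: "(\<Prod>i\<in>insert b A. (x(b := y)) i powr (a i - 1)) = y powr (a b - 1) * (\<Prod>i\<in>A. x i powr (a i - 1))"
    using assms by (auto intro!: sum.cong prod.cong)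
  have "sum x A \<ge> 0" if "\<forall>i\<in>A. 0 < x i"
    using that by (auto intro: sum_nonneg less_imp_le)
  moreover have "(\<forall>i\<in>insert b A. 0 < (x(b := y)) i) \<longleftrightarrow> 0 < y \<and> (\<forall>i\<in>A. 0 < x i)"
    using assms(1) by auto
  ultimately have "((\<forall>i\<in>insert b A. 0 < (x(b := y)) i) \<and> y + sum x A < s) \<longleftrightarrow>
     (0 < y \<and> y < s) \<and> (\<forall>i\<in>A. 0 < x i) \<and> sum x A < s - y"
    by auto
  then show ?thesis
    unfolding dirichlet_kernel_def sum_upd prod_upd by (auto simp: diff_diff_eq mult_ac)
qed

lemma nn_integral_dirichlet_kernel_insert:
  assumes "b \<notin> A" "finite A" "a b > 0" "S > 0" "K \<ge> 0" "s > 0"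
    and IH: "\<And>t. t > 0 \<Longrightarrow>
      (\<integral>\<^sup>+x. dirichlet_kernel A a c t x \<partial>Pi\<^sub>M A (\<lambda>_. lborel)) = ennreal (t powr (S - 1) * K)"
  shows "(\<integral>\<^sup>+x. dirichlet_kernel (insert b A) a c s x \<partial>Pi\<^sub>M (insert b A) (\<lambda>_. lborel)) =
    ennreal (s powr (a b + S - 1) * Beta (a b) S * K)"
proof -
  interpret product_sigma_finite "\<lambda>_. lborel" by standard
  let ?cut = "\<lambda>y. if 0 < y \<and> y < s then y powr (a b - 1) * (s - y) powr (S - 1) else 0"
  have slice: "(\<integral>\<^sup>+x. dirichlet_kernel (insert b A) a c s (x(b := y)) \<partial>Pi\<^sub>M A (\<lambda>_. lborel)) =
      ennreal (?cut y) * ennreal K" for y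
  proof (cases "0 < y \<and> y < s")
    case True
    then have "(\<integral>\<^sup>+x. dirichlet_kernel (insert b A) a c s (x(b := y)) \<partial>Pi\<^sub>M A (\<lambda>_. lborel)) =
        ennreal (y powr (a b - 1)) * (\<integral>\<^sup>+x. dirichlet_kernel A a c (s - y) x \<partial>Pi\<^sub>M A (\<lambda>_. lborel))"
      using assms(1,2)
      by (simp add: dirichlet_kernel_insert ennreal_mult dirichlet_kernel_nonneg nn_integral_cmult)
    then show ?thesis
      using True IH[of "s - y"] assms(5) by (simp add: ennreal_mult mult_ac)
  next
    case False
    show ?thesis
      by (simp only: dirichlet_kernel_insert[OF assms(1,2)] if_not_P[OF False]) simp
  qed
  have "(\<integral>\<^sup>+x. dirichlet_kernel (insert b A) a c s x \<partial>Pi\<^sub>M (insert b A) (\<lambda>_. lborel)) =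
      (\<integral>\<^sup>+y. \<integral>\<^sup>+x. dirichlet_kernel (insert b A) a c s (x(b := y)) \<partial>Pi\<^sub>M A (\<lambda>_. lborel) \<partial>lborel)"
    using assms(1,2) by (intro product_nn_integral_insert_rev) auto
  also have "\<dots> = (\<integral>\<^sup>+y. ennreal (?cut y) \<partial>lborel) * ennreal K"
    unfolding slice by (rule nn_integral_multc) measurable
  also have "\<dots> = ennreal (s powr (a b + S - 1) * Beta (a b) S * K)"
    using nn_integral_beta_scaled[OF assms(3,4,6)] assms(5) by (simp add: ennreal_mult'')
  finally show ?thesis .
qed

lemma nn_integral_dirichlet_kernel:
  assumes "finite A" "\<And>i. i \<in> A \<Longrightarrow> a i > 0" "c > 0" "s > 0"
  shows "(\<integral>\<^sup>+x. dirichlet_kernel A a c s x \<partial>Pi\<^sub>M A (\<lambda>_. lborel)) =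
    ennreal (s powr (sum a A + c - 1) * (\<Prod>i\<in>A. Gamma (a i)) * Gamma c / Gamma (sum a A + c))"
  using assms
proof (induction A arbitrary: s rule: finite_induct)
  case (empty s)
  moreover have "Gamma c \<noteq> 0"
    using empty by (simp add: less_imp_neq[symmetric])
  ultimately show ?case by (simp add: PiM_empty dirichlet_kernel_def)
next
  case (insert b A s)
  define S where "S = sum a A + c"
  define K where "K = (\<Prod>i\<in>A. Gamma (a i)) * Gamma c / Gamma S"
  have S: "S > 0"
    unfolding S_def using insert by (intro add_nonneg_pos sum_nonneg) (auto intro: less_imp_le)
  have K: "K \<ge> 0"
    unfolding K_def using insert S by (auto intro!: divide_nonneg_pos mult_nonneg_nonneg prod_nonneg
        less_imp_le[OF Gamma_real_pos])
  have "(\<integral>\<^sup>+x. dirichlet_kernel (insert b A) a c s x \<partial>Pi\<^sub>M (insert b A) (\<lambda>_. lborel)) =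
      ennreal (s powr (a b + S - 1) * Beta (a b) S * K)"
    using insert S K by (intro nn_integral_dirichlet_kernel_insert) (auto simp: S_def K_def mult_ac)
  also have "s powr (a b + S - 1) * Beta (a b) S * K =
      s powr (sum a (insert b A) + c - 1) * (\<Prod>i\<in>insert b A. Gamma (a i)) * Gamma c
        / Gamma (sum a (insert b A) + c)"
    using insert.hyps S by (simp add: Beta_def K_def S_def less_imp_neq[symmetric] field_simps)
  finally show ?case .
qed

lemma prod_nth_eq_prod_count_list:
  fixes f :: "'a \<Rightarrow> 'b::comm_monoid_mult"
  assumes "set xs \<subseteq> U" "finite U"
  shows "(\<Prod>i<length xs. f (xs ! i)) = (\<Prod>u\<in>U. f u ^ count_list xs u)"
  using assms(1)
proof (induction xs)
  case (Cons x xs)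
  have "(\<Prod>i<length (x # xs). f ((x # xs) ! i)) = f x * (\<Prod>u\<in>U. f u ^ count_list xs u)"
    using Cons by (simp add: prod.lessThan_Suc_shift del: prod.lessThan_Suc)
  also have "\<dots> = (\<Prod>u\<in>U. (if u = x then f u else 1) * f u ^ count_list xs u)"
    using Cons.prems assms(2) by (simp add: prod.distrib prod.delta')
  also have "\<dots> = (\<Prod>u\<in>U. f u ^ count_list (x # xs) u)"
    by (intro prod.cong) auto
  finally show ?case .
qed simp

lemma theta_of_pos_iff:
  assumes "Y \<ge> 1"
  shows "(\<forall>u\<in>{1..Y}. 0 < theta_of Y x u) \<longleftrightarrow> (\<forall>i\<in>{1..<Y}. 0 < x i) \<and> sum x {1..<Y} < 1"
proof -
  have "{1..Y} = insert Y {1..<Y}" using assms by auto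
  then show ?thesis by (auto simp: theta_of_def)
qed

lemma prod_theta_of_powr:
  assumes "Y \<ge> 1"
  shows "(\<Prod>u\<in>{1..Y}. theta_of Y x u powr e u) =
    (\<Prod>i\<in>{1..<Y}. x i powr e i) * (1 - sum x {1..<Y}) powr e Y"
proof -
  have "{1..Y} = insert Y {1..<Y}" using assms by auto
  then show ?thesis by (simp add: theta_of_def mult.commute)
qed

definition polya_prob :: "nat \<Rightarrow> real \<Rightarrow> nat list \<Rightarrow> real" where
  "polya_prob Y \<alpha> ts = Gamma (real Y * \<alpha>) / Gamma \<alpha> ^ Y *
     (\<Prod>u\<in>{1..Y}. Gamma (\<alpha> + real (count_list ts u))) / Gamma (real Y * \<alpha> + real (length ts))"

lemma dir_density_mult_likelihood:
  assumes "Y \<ge> 1" and "set ts \<subseteq> {1..Y}"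
  shows "dir_density Y \<alpha> x * (\<Prod>i<length ts. theta_of Y x (ts ! i)) =
    Gamma (real Y * \<alpha>) / Gamma \<alpha> ^ Y *
    dirichlet_kernel {1..<Y} (\<lambda>u. \<alpha> + count_list ts u) (\<alpha> + count_list ts Y) 1 x"
proof (cases "\<forall>u\<in>{1..Y}. 0 < theta_of Y x u")
  case True
  have "(\<Prod>u\<in>{1..Y}. theta_of Y x u powr (\<alpha> - 1)) * (\<Prod>i<length ts. theta_of Y x (ts ! i)) =
      (\<Prod>u\<in>{1..Y}. theta_of Y x u powr (\<alpha> - 1) * theta_of Y x u ^ count_list ts u)"
    using assms(2) by (simp add: prod_nth_eq_prod_count_list prod.distrib)
  also have "\<dots> = (\<Prod>u\<in>{1..Y}. theta_of Y x u powr (\<alpha> + count_list ts u - 1))"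
    using True by (intro prod.cong) (auto simp: powr_realpow[symmetric] powr_add[symmetric] algebra_simps)
  also have "\<dots> = dirichlet_kernel {1..<Y} (\<lambda>u. \<alpha> + count_list ts u) (\<alpha> + count_list ts Y) 1 x"
    using True unfolding prod_theta_of_powr[OF assms(1)] theta_of_pos_iff[OF assms(1)]
    by (simp add: dirichlet_kernel_def)
  finally show ?thesis
    using True by (simp add: dir_density_def mult.assoc)
next
  case False
  then have "dir_density Y \<alpha> x = 0"
    unfolding dir_density_def by (rule if_not_P)
  moreover from False have "\<not> ((\<forall>i\<in>{1..<Y}. 0 < x i) \<and> sum x {1..<Y} < 1)"
    unfolding theta_of_pos_iff[OF assms(1)] .
  then have "dirichlet_kernel {1..<Y} (\<lambda>u. \<alpha> + count_list ts u) (\<alpha> + count_list ts Y) 1 x = 0"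
    unfolding dirichlet_kernel_def by (rule if_not_P)
  ultimately show ?thesis by simp
qed

lemma bayes_prob_eq_polya_prob:
  assumes "Y \<ge> 1" "\<alpha> > 0" "set ts \<subseteq> {1..Y}"
  shows "bayes_prob Y \<alpha> ts = polya_prob Y \<alpha> ts"
proof -
  define a where "a u = \<alpha> + real (count_list ts u)" for u
  define C where "C = Gamma (real Y * \<alpha>) / Gamma \<alpha> ^ Y"
  have a: "a u > 0" for u
    using assms(2) unfolding a_def by (simp add: add_pos_nonneg)
  have C: "C > 0"
    unfolding C_def using assms(1,2) by simp
  have split: "{1..Y} = insert Y {1..<Y}" using assms(1) by auto
  have "sum a {1..Y} = real Y * \<alpha> + real (length ts)"
    using assms(3) by (simp add: a_def sum.distrib sum_count_set flip: of_nat_sum)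
  then have sum_a: "sum a {1..<Y} + a Y = real Y * \<alpha> + real (length ts)"
    unfolding split by simp
  have prod_Gamma: "(\<Prod>i\<in>{1..<Y}. Gamma (a i)) * Gamma (a Y) = (\<Prod>u\<in>{1..Y}. Gamma (a u))"
    unfolding split by simp
  have "(\<integral>\<^sup>+x. dir_density Y \<alpha> x * (\<Prod>i<length ts. theta_of Y x (ts ! i)) \<partial>(\<Pi>\<^sub>M u\<in>{1..<Y}. lborel))
      = (\<integral>\<^sup>+x. C * ennreal (dirichlet_kernel {1..<Y} a (a Y) 1 x) \<partial>(\<Pi>\<^sub>M u\<in>{1..<Y}. lborel))"
    using C unfolding dir_density_mult_likelihood[OF assms(1,3)] a_def C_def
    by (simp add: ennreal_mult'[symmetric])
  also have "\<dots> = C * (\<integral>\<^sup>+x. dirichlet_kernel {1..<Y} a (a Y) 1 x \<partial>(\<Pi>\<^sub>M u\<in>{1..<Y}. lborel))"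
    by (rule nn_integral_cmult) simp
  also have "(\<integral>\<^sup>+x. dirichlet_kernel {1..<Y} a (a Y) 1 x \<partial>(\<Pi>\<^sub>M u\<in>{1..<Y}. lborel)) =
      ennreal ((\<Prod>u\<in>{1..Y}. Gamma (a u)) / Gamma (real Y * \<alpha> + real (length ts)))"
  proof -
    have "(\<integral>\<^sup>+x. dirichlet_kernel {1..<Y} a (a Y) 1 x \<partial>(\<Pi>\<^sub>M u\<in>{1..<Y}. lborel)) =
        ennreal (1 powr (sum a {1..<Y} + a Y - 1) * (\<Prod>i\<in>{1..<Y}. Gamma (a i)) * Gamma (a Y)
          / Gamma (sum a {1..<Y} + a Y))"
      using a by (intro nn_integral_dirichlet_kernel) auto
    then show ?thesis
      by (simp only: sum_a powr_one_eq_one mult_1 prod_Gamma)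
  qed
  finally show ?thesis
    using C a assms(1,2) unfolding bayes_prob_def polya_prob_def C_def a_def
    by (simp add: ennreal_mult[symmetric] prod_nonneg less_imp_le add_pos_nonneg)
qed

definition polya_pred :: "nat \<Rightarrow> real \<Rightarrow> nat list \<Rightarrow> nat \<Rightarrow> real" where
  "polya_pred Y \<alpha> ts y = (\<alpha> + real (count_list ts y)) / (real Y * \<alpha> + real (length ts))"

lemma sum_polya_pred:
  assumes "Y \<ge> 1" "\<alpha> > 0" "set ts \<subseteq> {1..Y}"
  shows "(\<Sum>y\<in>{1..Y}. polya_pred Y \<alpha> ts y) = 1"
proof -
  have "(\<Sum>y\<in>{1..Y}. \<alpha> + real (count_list ts y)) = real Y * \<alpha> + real (length ts)"
    using assms(3) by (simp add: sum.distrib sum_count_set flip: of_nat_sum)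
  moreover have "real Y * \<alpha> + real (length ts) > 0"
    using assms(1,2) by (simp add: add_pos_nonneg)
  ultimately show ?thesis
    unfolding polya_pred_def by (simp add: sum_divide_distrib[symmetric])
qed

lemma polya_prob_pos: "Y \<ge> 1 \<Longrightarrow> \<alpha> > 0 \<Longrightarrow> polya_prob Y \<alpha> ts > 0"
  unfolding polya_prob_def by (simp add: add_pos_nonneg prod_pos)

lemma polya_prob_snoc:
  assumes "Y \<ge> 1" "\<alpha> > 0" "y \<in> {1..Y}"
  shows "polya_prob Y \<alpha> (ts @ [y]) = polya_prob Y \<alpha> ts * polya_pred Y \<alpha> ts y"
proof -
  define n where "n u = \<alpha> + real (count_list ts u)" for u
  define N where "N = real Y * \<alpha> + real (length ts)"
  have n: "n y > 0" and N: "N > 0"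
    using assms unfolding n_def N_def by (simp_all add: add_pos_nonneg)
  have Gamma_succ: "Gamma (z + 1) = z * Gamma z" if "z > 0" for z :: real
    using that by (intro Gamma_plus1) auto
  have count_y: "\<alpha> + real (count_list (ts @ [y]) y) = n y + 1"
    by (simp add: n_def)
  have "Gamma (\<alpha> + real (count_list (ts @ [y]) y)) = n y * Gamma (n y)"
    unfolding count_y by (rule Gamma_succ[OF n])
  then have "Gamma (\<alpha> + real (count_list (ts @ [y]) u)) = (if u = y then n u else 1) * Gamma (n u)" for u
    by (cases "u = y") (simp_all add: n_def)
  then have "(\<Prod>u\<in>{1..Y}. Gamma (\<alpha> + real (count_list (ts @ [y]) u))) =
      (\<Prod>u\<in>{1..Y}. (if u = y then n u else 1) * Gamma (n u))"
    by simp
  also have "\<dots> = n y * (\<Prod>u\<in>{1..Y}. Gamma (n u))"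
    using assms(3) by (simp add: prod.distrib prod.delta')
  finally have prod_snoc: "(\<Prod>u\<in>{1..Y}. Gamma (\<alpha> + real (count_list (ts @ [y]) u))) =
      n y * (\<Prod>u\<in>{1..Y}. Gamma (n u))" .
  have length_snoc: "real Y * \<alpha> + real (length (ts @ [y])) = N + 1"
    by (simp add: N_def)
  have Gamma_snoc: "Gamma (real Y * \<alpha> + real (length (ts @ [y]))) = N * Gamma N"
    unfolding length_snoc by (rule Gamma_succ[OF N])
  show ?thesis
    unfolding polya_prob_def polya_pred_def prod_snoc Gamma_snoc
    unfolding n_def[symmetric] N_def[symmetric]
    using N by (simp add: ac_simps)
qed

lemma bayes_prob_pos:
  "Y \<ge> 1 \<Longrightarrow> \<alpha> > 0 \<Longrightarrow> set ts \<subseteq> {1..Y} \<Longrightarrow> bayes_prob Y \<alpha> ts > 0"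
  by (simp add: bayes_prob_eq_polya_prob polya_prob_pos)

lemma bayes_prob_snoc:
  assumes "Y \<ge> 1" "\<alpha> > 0" "set ts \<subseteq> {1..Y}" "y \<in> {1..Y}"
  shows "bayes_prob Y \<alpha> (ts @ [y]) = bayes_prob Y \<alpha> ts * polya_pred Y \<alpha> ts y"
  using assms by (simp add: bayes_prob_eq_polya_prob polya_prob_snoc)

lemma sum_bayes_prob_snoc:
  assumes "Y \<ge> 1" "\<alpha> > 0" "set ts \<subseteq> {1..Y}"
  shows "(\<Sum>y\<in>{1..Y}. bayes_prob Y \<alpha> (ts @ [y])) = bayes_prob Y \<alpha> ts"
proof -
  have "(\<Sum>y\<in>{1..Y}. bayes_prob Y \<alpha> (ts @ [y])) = (\<Sum>y\<in>{1..Y}. bayes_prob Y \<alpha> ts * polya_pred Y \<alpha> ts y)"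
    using assms by (intro sum.cong) (auto simp: bayes_prob_snoc)
  also have "\<dots> = bayes_prob Y \<alpha> ts"
    by (simp only: sum_distrib_left[symmetric] sum_polya_pred[OF assms] mult_1_right)
  finally show ?thesis .
qed

lemma finite_train_sets: "finite (train_sets Y l)"
  unfolding train_sets_def using finite_lists_length_eq[of "{1..Y}" l] by (simp add: conj_commute)

lemma train_sets_Suc:
  "train_sets Y (Suc l) = (\<lambda>(ts, y). ts @ [y]) ` (train_sets Y l \<times> {1..Y})"
proof (intro equalityI subsetI)
  fix xs assume "xs \<in> train_sets Y (Suc l)"
  then have xs: "length xs = Suc l" "set xs \<subseteq> {1..Y}"
    by (auto simp: train_sets_def)
  then obtain ts y where "xs = ts @ [y]"
    by (metis length_Suc_conv_rev)
  with xs show "xs \<in> (\<lambda>(ts, y). ts @ [y]) ` (train_sets Y l \<times> {1..Y})"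
    by (auto simp: train_sets_def image_iff)
qed (auto simp: train_sets_def)

lemma sum_bayes_prob_train_sets:
  assumes "Y \<ge> 1" "\<alpha> > 0"
  shows "(\<Sum>ts\<in>train_sets Y l. bayes_prob Y \<alpha> ts) = 1"
proof (induction l)
  case 0
  have "train_sets Y 0 = {[]}"
    by (auto simp: train_sets_def)
  then show ?case
    using assms by (simp add: bayes_prob_eq_polya_prob polya_prob_def less_imp_neq[symmetric])
next
  case (Suc l)
  have "inj_on (\<lambda>(ts, y). ts @ [y]) (train_sets Y l \<times> {1..Y})"
    by (auto simp: inj_on_def)
  then have "(\<Sum>ts\<in>train_sets Y (Suc l). bayes_prob Y \<alpha> ts) =
      (\<Sum>ts\<in>train_sets Y l. \<Sum>y\<in>{1..Y}. bayes_prob Y \<alpha> (ts @ [y]))"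
    by (simp add: train_sets_Suc sum.reindex sum.cartesian_product case_prod_unfold)
  also have "\<dots> = (\<Sum>ts\<in>train_sets Y l. bayes_prob Y \<alpha> ts)"
  proof (rule sum.cong[OF refl])
    fix ts assume "ts \<in> train_sets Y l"
    then show "(\<Sum>y\<in>{1..Y}. bayes_prob Y \<alpha> (ts @ [y])) = bayes_prob Y \<alpha> ts"
      using assms by (intro sum_bayes_prob_snoc) (auto simp: train_sets_def)
  qed
  finally show ?case
    using Suc by simp
qed

lemma sum_ereal_eq_MInfty:
  fixes g :: "'a \<Rightarrow> ereal"
  assumes "finite A" "\<And>i. i \<in> A \<Longrightarrow> g i \<noteq> \<infinity>" "i \<in> A" "g i = -\<infinity>"
  shows "sum g A = -\<infinity>"
proof -
  have "sum g (A - {i}) \<noteq> \<infinity>"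
    using assms(1,2) by (simp add: sum_Pinfty)
  then show ?thesis
    using assms(1,3,4) by (simp add: sum.remove)
qed

text \<open>If \<open>\<Sum> b f \<le> 1\<close>, both summands on the right are nonnegative (the second by
  \<open>ln x \<le> x - 1\<close>), so \<open>g\<close> maximises \<open>\<Sum> a ln f\<close>.\<close>

lemma sum_ln_gap:
  fixes a b f g :: "'i \<Rightarrow> real"
  assumes "finite I" and a: "\<And>i. i \<in> I \<Longrightarrow> 0 < a i" and b: "\<And>i. i \<in> I \<Longrightarrow> 0 < b i"
    and f: "\<And>i. i \<in> I \<Longrightarrow> 0 < f i" and g: "\<And>i. i \<in> I \<Longrightarrow> g i = a i / (sum a I * b i)"
  shows "(\<Sum>i\<in>I. a i * ln (g i)) - (\<Sum>i\<in>I. a i * ln (f i))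
       = sum a I * (1 - (\<Sum>i\<in>I. b i * f i)) + (\<Sum>i\<in>I. a i * (f i / g i - 1 - ln (f i / g i)))"
proof -
  have pointwise: "a i * ln (g i) - a i * ln (f i)
      = a i * (f i / g i - 1 - ln (f i / g i)) + (a i - sum a I * (b i * f i))" if i: "i \<in> I" for i
  proof -
    have "sum a I > 0"
      using assms(1) a i by (intro sum_pos) auto
    then have "g i > 0" and "a i * (f i / g i) = sum a I * (b i * f i)"
      using a[OF i] b[OF i] g[OF i] by simp_all
    then show ?thesis
      using f[OF i] by (simp add: ln_div algebra_simps)
  qed
  have "(\<Sum>i\<in>I. a i * ln (g i)) - (\<Sum>i\<in>I. a i * ln (f i))
      = (\<Sum>i\<in>I. a i * (f i / g i - 1 - ln (f i / g i)) + (a i - sum a I * (b i * f i)))"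
    unfolding sum_subtractf[symmetric] by (rule sum.cong[OF refl]) (rule pointwise)
  also have "\<dots> = (\<Sum>i\<in>I. a i * (f i / g i - 1 - ln (f i / g i)))
      + (sum a I - sum a I * (\<Sum>i\<in>I. b i * f i))"
    by (simp add: sum.distrib sum_subtractf sum_distrib_left)
  finally show ?thesis
    by (simp add: algebra_simps)
qed

lemma sum_ln_optimum:
  fixes a b f g :: "'i \<Rightarrow> real"
  assumes "finite I" "\<And>i. i \<in> I \<Longrightarrow> 0 < a i" "\<And>i. i \<in> I \<Longrightarrow> 0 < b i"
    and "\<And>i. i \<in> I \<Longrightarrow> 0 < f i" and "\<And>i. i \<in> I \<Longrightarrow> g i = a i / (sum a I * b i)"
    and "(\<Sum>i\<in>I. b i * f i) \<le> 1"
  shows "(\<Sum>i\<in>I. a i * ln (f i)) \<le> (\<Sum>i\<in>I. a i * ln (g i))"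
    and "(\<Sum>i\<in>I. a i * ln (f i)) = (\<Sum>i\<in>I. a i * ln (g i)) \<Longrightarrow> i \<in> I \<Longrightarrow> f i = g i"
proof -
  define d where "d i = a i * (f i / g i - 1 - ln (f i / g i))" for i
  have ratio: "f i / g i > 0" if "i \<in> I" for i
    using assms(1-5) that by (auto intro!: divide_pos_pos mult_pos_pos sum_pos)
  have d: "d i \<ge> 0" if "i \<in> I" for i
    unfolding d_def using assms(2) ratio that by (simp add: less_imp_le ln_le_minus_one)
  have slack: "sum a I * (1 - (\<Sum>i\<in>I. b i * f i)) \<ge> 0"
    using assms(2,6) by (simp add: sum_nonneg less_imp_le)
  have gap: "(\<Sum>i\<in>I. a i * ln (g i)) - (\<Sum>i\<in>I. a i * ln (f i))
      = sum a I * (1 - (\<Sum>i\<in>I. b i * f i)) + sum d I"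
    unfolding d_def by (rule sum_ln_gap) (use assms in auto)
  then show "(\<Sum>i\<in>I. a i * ln (f i)) \<le> (\<Sum>i\<in>I. a i * ln (g i))"
    using slack sum_nonneg[of I d] d by fastforce
  show "f i = g i" if eq: "(\<Sum>i\<in>I. a i * ln (f i)) = (\<Sum>i\<in>I. a i * ln (g i))" and i: "i \<in> I"
  proof -
    have "sum d I = 0"
      using gap eq slack sum_nonneg[of I d] d by fastforce
    then have "d i = 0"
      using sum_nonneg_eq_0_iff[of I d] assms(1) d i by simp
    then have "ln (f i / g i) = f i / g i - 1"
      using assms(2)[OF i] unfolding d_def by simp
    then have "f i / g i = 1"
      using ln_eq_minus_one ratio[OF i] by blast
    then show ?thesis
      using ratio[OF i] by (simp add: divide_eq_1_iff)
  qed
qed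

lemma log_obj_eq_sum_ln:
  assumes "Y \<ge> 1" "\<alpha> > 0"
    and pos: "\<And>ts y'. ts \<in> train_sets Y l \<Longrightarrow> y' \<in> {1..Y} \<Longrightarrow> 0 < f ts y'"
  shows "log_obj Y \<alpha> l f = ereal (\<Sum>(ts, y')\<in>train_sets Y l \<times> {1..Y}. bayes_prob Y \<alpha> ts * ln (f ts y'))"
proof -
  have "(\<Sum>y\<in>{1..Y}. ereal (bayes_prob Y \<alpha> (ts @ [y])) * (\<Sum>y'\<in>{1..Y}. ln_ext (f ts y')))
      = ereal (\<Sum>y'\<in>{1..Y}. bayes_prob Y \<alpha> ts * ln (f ts y'))" if ts: "ts \<in> train_sets Y l" for ts
  proof -
    define L where "L = (\<Sum>y'\<in>{1..Y}. ln (f ts y'))"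
    have "(\<Sum>y'\<in>{1..Y}. ln_ext (f ts y')) = (\<Sum>y'\<in>{1..Y}. ereal (ln (f ts y')))"
    proof (rule sum.cong[OF refl])
      fix y' assume "y' \<in> {1..Y}"
      then have "0 < f ts y'" by (rule pos[OF ts])
      then show "ln_ext (f ts y') = ereal (ln (f ts y'))" by (simp add: ln_ext_def)
    qed
    then have "(\<Sum>y\<in>{1..Y}. ereal (bayes_prob Y \<alpha> (ts @ [y])) * (\<Sum>y'\<in>{1..Y}. ln_ext (f ts y')))
        = ereal ((\<Sum>y\<in>{1..Y}. bayes_prob Y \<alpha> (ts @ [y])) * L)"
      unfolding L_def by (simp add: sum_distrib_right)
    also have "(\<Sum>y\<in>{1..Y}. bayes_prob Y \<alpha> (ts @ [y])) = bayes_prob Y \<alpha> ts"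
      using assms(1,2) ts by (intro sum_bayes_prob_snoc) (auto simp: train_sets_def)
    finally show ?thesis
      unfolding L_def by (simp add: sum_distrib_left)
  qed
  then have "log_obj Y \<alpha> l f =
      (\<Sum>ts\<in>train_sets Y l. ereal (\<Sum>y'\<in>{1..Y}. bayes_prob Y \<alpha> ts * ln (f ts y')))"
    unfolding log_obj_def by (rule sum.cong[OF refl])
  then show ?thesis
    by (simp add: sum.cartesian_product)
qed

lemma log_obj_eq_MInfty:
  assumes "Y \<ge> 1" "\<alpha> > 0" and "ts \<in> train_sets Y l" "y' \<in> {1..Y}" "f ts y' = 0"
  shows "log_obj Y \<alpha> l f = -\<infinity>"
proof -
  define S where "S ts = (\<Sum>y'\<in>{1..Y}. ln_ext (f ts y'))" for ts
  have S: "S ts \<noteq> \<infinity>" for ts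
    unfolding S_def by (simp add: sum_Pinfty ln_ext_def)
  have "S ts = -\<infinity>"
    unfolding S_def using assms(4,5) by (intro sum_ereal_eq_MInfty) (auto simp: ln_ext_def)
  have prob_pos: "bayes_prob Y \<alpha> (ts' @ [y]) > 0" if "ts' \<in> train_sets Y l" "y \<in> {1..Y}" for ts' y
    using assms(1,2) that by (intro bayes_prob_pos) (auto simp: train_sets_def)
  have "(\<Sum>y\<in>{1..Y}. ereal (bayes_prob Y \<alpha> (ts' @ [y])) * S ts') \<noteq> \<infinity>"
    if ts': "ts' \<in> train_sets Y l" for ts'
  proof -
    have "ereal (bayes_prob Y \<alpha> (ts' @ [y])) * S ts' \<noteq> \<infinity>" if "y \<in> {1..Y}" for y
      using prob_pos[OF ts' that] S[of ts'] by (cases "S ts'") auto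
    then show ?thesis
      unfolding sum_Pinfty by blast
  qed
  moreover have "(\<Sum>y\<in>{1..Y}. ereal (bayes_prob Y \<alpha> (ts @ [y])) * S ts) = -\<infinity>"
    using prob_pos[OF assms(3)] \<open>S ts = -\<infinity>\<close> assms(4) by (intro sum_ereal_eq_MInfty) auto
  ultimately show ?thesis
    unfolding log_obj_def S_def[symmetric] using assms(3)
    by (intro sum_ereal_eq_MInfty[OF finite_train_sets]) auto
qed

definition bayes_opt_e :: "nat \<Rightarrow> real \<Rightarrow> nat \<Rightarrow> nat list \<Rightarrow> nat \<Rightarrow> real" where
  "bayes_opt_e Y \<alpha> l ts y' = 1 / real Y * ((real l + real Y * \<alpha>) / (real (count_list ts y') + \<alpha>))"

lemma bayes_opt_e_pos:
  assumes "Y \<ge> 1" "\<alpha> > 0"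
  shows "bayes_opt_e Y \<alpha> l ts y' > 0"
proof -
  have "real l + real Y * \<alpha> > 0" "real (count_list ts y') + \<alpha> > 0"
    using assms by (simp_all add: add_nonneg_pos)
  then show ?thesis
    unfolding bayes_opt_e_def using assms by simp
qed

lemma bayes_opt_e_eq_prob_ratio:
  assumes "Y \<ge> 1" "\<alpha> > 0" "ts \<in> train_sets Y l" "y \<in> {1..Y}"
  shows "bayes_opt_e Y \<alpha> l ts y = bayes_prob Y \<alpha> ts / (real Y * bayes_prob Y \<alpha> (ts @ [y]))"
proof -
  have ts: "set ts \<subseteq> {1..Y}" "length ts = l"
    using assms(3) by (auto simp: train_sets_def)
  have "bayes_prob Y \<alpha> ts > 0"
    using assms(1,2) ts(1) by (rule bayes_prob_pos)
  then have "bayes_prob Y \<alpha> ts / (real Y * bayes_prob Y \<alpha> (ts @ [y])) = 1 / (real Y * polya_pred Y \<alpha> ts y)"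
    using assms(1,2,4) ts(1) by (simp add: bayes_prob_snoc)
  then show ?thesis
    unfolding bayes_opt_e_def polya_pred_def ts(2) by (simp add: ac_simps)
qed

lemma sum_bayes_prob_pairs:
  assumes "Y \<ge> 1" "\<alpha> > 0"
  shows "(\<Sum>(ts, y')\<in>train_sets Y l \<times> {1..Y}. bayes_prob Y \<alpha> ts) = real Y"
  using sum_bayes_prob_train_sets[OF assms]
  by (simp add: sum.cartesian_product[symmetric] sum_distrib_left[symmetric])

lemma valid_bayes_opt_e:
  assumes "Y \<ge> 1" "\<alpha> > 0"
  shows "valid_bayes Y \<alpha> l (bayes_opt_e Y \<alpha> l)"
proof -
  have "bayes_expect Y \<alpha> l (bayes_opt_e Y \<alpha> l) =
      (\<Sum>ts\<in>train_sets Y l. \<Sum>y\<in>{1..Y}. bayes_prob Y \<alpha> ts / real Y)"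
    unfolding bayes_expect_def
  proof (intro sum.cong refl)
    fix ts y assume ts: "ts \<in> train_sets Y l" and y: "y \<in> {1..Y}"
    then have "bayes_prob Y \<alpha> (ts @ [y]) > 0"
      using assms by (intro bayes_prob_pos) (auto simp: train_sets_def)
    then show "bayes_prob Y \<alpha> (ts @ [y]) * bayes_opt_e Y \<alpha> l ts y = bayes_prob Y \<alpha> ts / real Y"
      unfolding bayes_opt_e_eq_prob_ratio[OF assms ts y] by simp
  qed
  also have "\<dots> = 1"
    using assms sum_bayes_prob_train_sets[OF assms] by simp
  finally show ?thesis
    using bayes_opt_e_pos[OF assms]
    by (simp add: valid_bayes_def e_variable_def less_imp_le)
qed

lemma valid_bayes_MInfty_or_pos:
  assumes "Y \<ge> 1" "\<alpha> > 0" "valid_bayes Y \<alpha> l f"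
  obtains "log_obj Y \<alpha> l f = -\<infinity>"
    | "\<And>ts y'. ts \<in> train_sets Y l \<Longrightarrow> y' \<in> {1..Y} \<Longrightarrow> 0 < f ts y'"
proof (cases "\<exists>ts\<in>train_sets Y l. \<exists>y'\<in>{1..Y}. f ts y' = 0")
  case True
  then show ?thesis
    using log_obj_eq_MInfty[OF assms(1,2)] that(1) by blast
next
  case False
  then show ?thesis
    using assms(3) that(2) unfolding valid_bayes_def e_variable_def by (force simp: less_le)
qed

lemma sum_ln_le_bayes_opt_e:
  assumes "Y \<ge> 1" "\<alpha> > 0" "valid_bayes Y \<alpha> l f"
    and pos: "\<And>ts y'. ts \<in> train_sets Y l \<Longrightarrow> y' \<in> {1..Y} \<Longrightarrow> 0 < f ts y'"
  defines "I \<equiv> train_sets Y l \<times> {1..Y}"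
  shows "(\<Sum>(ts, y')\<in>I. bayes_prob Y \<alpha> ts * ln (f ts y'))
      \<le> (\<Sum>(ts, y')\<in>I. bayes_prob Y \<alpha> ts * ln (bayes_opt_e Y \<alpha> l ts y'))"
    and "(\<Sum>(ts, y')\<in>I. bayes_prob Y \<alpha> ts * ln (f ts y'))
      = (\<Sum>(ts, y')\<in>I. bayes_prob Y \<alpha> ts * ln (bayes_opt_e Y \<alpha> l ts y')) \<Longrightarrow>
      ts \<in> train_sets Y l \<Longrightarrow> y' \<in> {1..Y} \<Longrightarrow> f ts y' = bayes_opt_e Y \<alpha> l ts y'"
proof -
  define a :: "nat list \<times> nat \<Rightarrow> real" where "a i = bayes_prob Y \<alpha> (fst i)" for i
  define b :: "nat list \<times> nat \<Rightarrow> real" where "b i = bayes_prob Y \<alpha> (fst i @ [snd i])" for i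
  define g where "g i = bayes_opt_e Y \<alpha> l (fst i) (snd i)" for i
  define F where "F i = f (fst i) (snd i)" for i
  have I: "finite I"
    unfolding I_def by (simp add: finite_train_sets)
  have a: "0 < a i" and b: "0 < b i" if "i \<in> I" for i
    using that assms(1,2) unfolding I_def a_def b_def
    by (auto intro!: bayes_prob_pos simp: train_sets_def)
  have F: "0 < F i" if "i \<in> I" for i
    using that pos unfolding I_def F_def by auto
  have g: "g i = a i / (sum a I * b i)" if "i \<in> I" for i
    using that sum_bayes_prob_pairs[OF assms(1,2)] bayes_opt_e_eq_prob_ratio[OF assms(1,2)]
    unfolding I_def a_def b_def g_def by (auto simp: case_prod_unfold)
  have expect: "(\<Sum>i\<in>I. b i * F i) \<le> 1"
    using assms(3) unfolding valid_bayes_def bayes_expect_def I_def b_def F_def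
    by (simp add: sum.cartesian_product case_prod_unfold)
  note hyps = I a b F g expect
  show "(\<Sum>(ts, y')\<in>I. bayes_prob Y \<alpha> ts * ln (f ts y'))
      \<le> (\<Sum>(ts, y')\<in>I. bayes_prob Y \<alpha> ts * ln (bayes_opt_e Y \<alpha> l ts y'))"
    using sum_ln_optimum(1)[OF hyps] unfolding a_def F_def g_def case_prod_unfold .
  show "f ts y' = bayes_opt_e Y \<alpha> l ts y'"
    if "(\<Sum>(ts, y')\<in>I. bayes_prob Y \<alpha> ts * ln (f ts y'))
      = (\<Sum>(ts, y')\<in>I. bayes_prob Y \<alpha> ts * ln (bayes_opt_e Y \<alpha> l ts y'))"
      and "ts \<in> train_sets Y l" "y' \<in> {1..Y}"
    using sum_ln_optimum(2)[OF hyps, of "(ts, y')"] that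
    unfolding a_def F_def g_def case_prod_unfold I_def by simp
qed

lemma bayes_opt_e_optimal:
  assumes "Y \<ge> 1" "\<alpha> > 0" "valid_bayes Y \<alpha> l f"
  shows "log_obj Y \<alpha> l f \<le> log_obj Y \<alpha> l (bayes_opt_e Y \<alpha> l)"
    and "log_obj Y \<alpha> l f = log_obj Y \<alpha> l (bayes_opt_e Y \<alpha> l) \<Longrightarrow>
      ts \<in> train_sets Y l \<Longrightarrow> y' \<in> {1..Y} \<Longrightarrow> f ts y' = bayes_opt_e Y \<alpha> l ts y'"
proof -
  have log_obj_opt: "log_obj Y \<alpha> l (bayes_opt_e Y \<alpha> l) =
      ereal (\<Sum>(ts, y')\<in>train_sets Y l \<times> {1..Y}. bayes_prob Y \<alpha> ts * ln (bayes_opt_e Y \<alpha> l ts y'))"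
    using assms(1,2) by (intro log_obj_eq_sum_ln bayes_opt_e_pos)
  consider (MInfty) "log_obj Y \<alpha> l f = -\<infinity>"
    | (pos) "\<And>ts y'. ts \<in> train_sets Y l \<Longrightarrow> y' \<in> {1..Y} \<Longrightarrow> 0 < f ts y'"
    using valid_bayes_MInfty_or_pos[OF assms] by blast
  then show "log_obj Y \<alpha> l f \<le> log_obj Y \<alpha> l (bayes_opt_e Y \<alpha> l)"
  proof cases
    case pos
    have "log_obj Y \<alpha> l f =
        ereal (\<Sum>(ts, y')\<in>train_sets Y l \<times> {1..Y}. bayes_prob Y \<alpha> ts * ln (f ts y'))"
      by (rule log_obj_eq_sum_ln[OF assms(1,2)]) (rule pos)
    then show ?thesis
      unfolding log_obj_opt using sum_ln_le_bayes_opt_e(1)[OF assms pos] by simp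
  qed simp
  show "f ts y' = bayes_opt_e Y \<alpha> l ts y'"
    if eq: "log_obj Y \<alpha> l f = log_obj Y \<alpha> l (bayes_opt_e Y \<alpha> l)"
      and "ts \<in> train_sets Y l" "y' \<in> {1..Y}"
  proof -
    have pos: "0 < f t u" if "t \<in> train_sets Y l" "u \<in> {1..Y}" for t u
      by (rule valid_bayes_MInfty_or_pos[OF assms]) (use eq log_obj_opt that in auto)
    have "log_obj Y \<alpha> l f =
        ereal (\<Sum>(ts, y')\<in>train_sets Y l \<times> {1..Y}. bayes_prob Y \<alpha> ts * ln (f ts y'))"
      by (rule log_obj_eq_sum_ln[OF assms(1,2)]) (rule pos)
    then show ?thesis
      using eq that unfolding log_obj_opt
      by (intro sum_ln_le_bayes_opt_e(2)[OF assms pos]) auto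
  qed
qed

theorem proposition4:
  fixes Y l :: nat and \<alpha> :: real
  assumes "Y \<ge> 2" and "\<alpha> > 0"
  defines "e0 \<equiv> (\<lambda>ts y'. (1 / real Y) * ((real l + real Y * \<alpha>) / (real (count_list ts y') + \<alpha>)))"
  shows "valid_bayes Y \<alpha> l e0
    \<and> (\<forall>f. valid_bayes Y \<alpha> l f \<longrightarrow> log_obj Y \<alpha> l f \<le> log_obj Y \<alpha> l e0)
    \<and> (\<forall>f. valid_bayes Y \<alpha> l f \<and> log_obj Y \<alpha> l f = log_obj Y \<alpha> l e0 \<longrightarrow>
          (\<forall>ts\<in>train_sets Y l. \<forall>y'\<in>{1..Y}. f ts y' = e0 ts y'))"
proof -
  have Y: "Y \<ge> 1"
    using assms(1) by simp
  have "e0 = bayes_opt_e Y \<alpha> l"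
    unfolding e0_def by (simp add: fun_eq_iff bayes_opt_e_def)
  then show ?thesis
    using valid_bayes_opt_e[OF Y assms(2)] bayes_opt_e_optimal[OF Y assms(2)] by blast
qed

end
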